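(* Let $a\in\mathbb{Z}\setminus\{0\}$ and let $f(X)=X(X+a)$. Then the system \[ f(x)+f(y)=f(p),\quad f(y)+f(z)=f(q),\quad f(z)+f(x)=f(r) \] has infinitely many solutions $(x,y,z,p,q,r)$ in positive integers. *)

theory Defs
  imports Main
begin

definition fq :: "int \<Rightarrow> int \<Rightarrow> int" where
  "fq a X = X * (X + a)"

end

theory Submission
  imports Defs
begin

text \<open>
  Since \<open>f\<close> is symmetric about \<open>-a/2\<close>, a suitable affine change of variables gives
  \<open>f(X') = a\<^sup>2 X (X + 1)\<close> with \<open>X' > 0\<close> whenever \<open>X > 0\<close>; so it suffices to treat \<open>a = 1\<close>.
  There we take \<open>y = z\<close> and \<open>p = r = x + 1\<close>: the first and third equations say
  \<open>y (y + 1) = 2 (x + 1)\<close>, which fixes \<open>x\<close>, and the second says \<open>2 y (y + 1) = q (q + 1)\<close>,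
  a Pell equation with infinitely many positive solutions.
\<close>

definition solutions :: "int \<Rightarrow> (int \<times> int \<times> int \<times> int \<times> int \<times> int) set" where
  "solutions a = {(x, y, z, p, q, r).
                    x > 0 \<and> y > 0 \<and> z > 0 \<and> p > 0 \<and> q > 0 \<and> r > 0 \<and>
                    fq a x + fq a y = fq a p \<and>
                    fq a y + fq a z = fq a q \<and>
                    fq a z + fq a x = fq a r}"

definition rescale :: "int \<Rightarrow> int \<Rightarrow> int" where
  "rescale a X = (if a > 0 then a * X else - a * (X + 1))"

lemma fq_rescale: "fq a (rescale a X) = a\<^sup>2 * fq 1 X"
  unfolding fq_def rescale_def power2_eq_square by (simp add: algebra_simps)

lemma rescale_pos: "a \<noteq> 0 \<Longrightarrow> X > 0 \<Longrightarrow> rescale a X > 0"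
  unfolding rescale_def by (auto simp: mult_neg_pos)

lemma inj_rescale: "a \<noteq> 0 \<Longrightarrow> inj (rescale a)"
  unfolding rescale_def by (rule injI) (auto split: if_splits)

lemma rescale_solutions:
  assumes "a \<noteq> 0" and "(x, y, z, p, q, r) \<in> solutions 1"
  shows "(rescale a x, rescale a y, rescale a z, rescale a p, rescale a q, rescale a r)
           \<in> solutions a"
  using assms rescale_pos[OF \<open>a \<noteq> 0\<close>]
  by (simp add: solutions_def fq_rescale flip: distrib_left)

lemma infinite_solutions_rescale:
  assumes "a \<noteq> 0" and "infinite (solutions 1)"
  shows "infinite (solutions a)"
proof -
  define R where "R = (\<lambda>(x, y, z, p, q, r).
    (rescale a x, rescale a y, rescale a z, rescale a p, rescale a q, rescale a r))"
  have "inj R"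
    using inj_rescale[OF \<open>a \<noteq> 0\<close>] unfolding R_def inj_def by auto
  then have "infinite (R ` solutions 1)"
    using assms(2) finite_imageD inj_on_subset by blast
  moreover have "R ` solutions 1 \<subseteq> solutions a"
    using rescale_solutions[OF \<open>a \<noteq> 0\<close>] unfolding R_def by auto
  ultimately show ?thesis
    using finite_subset by blast
qed

lemma fq_one_succ: "fq 1 (k - 1) + 2 * k = fq 1 k"
  unfolding fq_def by (simp add: algebra_simps)

lemma solution_from_double_oblong:
  assumes "y \<ge> 2" and "q > 0" and "2 * fq 1 y = fq 1 q"
  defines "k \<equiv> fq 1 y div 2"
  shows "(k - 1, y, y, k, q, k) \<in> solutions 1"
proof -
  have "fq 1 y = 2 * k"
    unfolding k_def fq_def by simp
  moreover have "2 * 3 \<le> fq 1 y"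
    using \<open>y \<ge> 2\<close> unfolding fq_def by (intro mult_mono) auto
  ultimately show ?thesis
    using assms(1-3) fq_one_succ[of k] unfolding solutions_def by (auto simp: add.commute)
qed

text \<open>
  With \<open>u = 2y + 1\<close>, \<open>v = 2q + 1\<close> the equation \<open>2 y (y + 1) = q (q + 1)\<close> reads
  \<open>2u\<^sup>2 - v\<^sup>2 = 1\<close>; the step below is multiplication of \<open>v + u\<surd>2\<close> by the unit \<open>3 + 2\<surd>2\<close>.
\<close>
lemma double_oblong_step:
  assumes "2 * fq 1 y = fq 1 q"
  shows "2 * fq 1 (3 * y + 2 * q + 2) = fq 1 (4 * y + 3 * q + 3)"
  using assms unfolding fq_def by (simp add: algebra_simps)

lemma infinite_double_oblong: "infinite {y. y \<ge> 2 \<and> (\<exists>q > 0. 2 * fq 1 y = fq 1 q)}"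
proof (rule infinite_growing)
  have "2 * fq 1 2 = fq 1 3"
    by (simp add: fq_def)
  then show "{y. y \<ge> 2 \<and> (\<exists>q > 0. 2 * fq 1 y = fq 1 q)} \<noteq> {}"
    by fastforce
next
  fix y assume "y \<in> {y. y \<ge> 2 \<and> (\<exists>q > 0. 2 * fq 1 y = fq 1 q)}"
  then obtain q where "y \<ge> 2" "q > 0" "2 * fq 1 y = fq 1 q"
    by blast
  then show "\<exists>y'\<in>{y. y \<ge> 2 \<and> (\<exists>q > 0. 2 * fq 1 y = fq 1 q)}. y' > y"
    using double_oblong_step
    by (intro bexI[of _ "3 * y + 2 * q + 2"]) (auto intro!: exI[of _ "4 * y + 3 * q + 3"])
qed

lemma infinite_solutions_one: "infinite (solutions 1)"
proof
  assume "finite (solutions 1)"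
  then have "finite ((\<lambda>(x, y, z, p, q, r). y) ` solutions 1)"
    by blast
  moreover have "{y. y \<ge> 2 \<and> (\<exists>q > 0. 2 * fq 1 y = fq 1 q)}
                   \<subseteq> (\<lambda>(x, y, z, p, q, r). y) ` solutions 1"
    using solution_from_double_oblong by (fastforce intro: rev_image_eqI)
  ultimately show False
    using infinite_double_oblong finite_subset by blast
qed

theorem mainTheorem2:
  fixes a :: int
  assumes "a \<noteq> 0"
  shows "infinite {(x::int, y::int, z::int, p::int, q::int, r::int).
                    x > 0 \<and> y > 0 \<and> z > 0 \<and> p > 0 \<and> q > 0 \<and> r > 0 \<and>
                    fq a x + fq a y = fq a p \<and>
                    fq a y + fq a z = fq a q \<and>
                    fq a z + fq a x = fq a r}"
  using infinite_solutions_rescale[OF assms infinite_solutions_one]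
  unfolding solutions_def .

end
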